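(* If $E$ is an order continuous quasi-normed symmetric space on $I$ (with $E\subseteq c_0$ if $I=\mathbb N$), then $E\in(HC)$.
   Context: $I$ is either $[0,\alpha)$, $0<\alpha\le\infty$, with Lebesgue measure $m$, or $\mathbb N$ with counting measure $m$; $L_0(I)$ denotes complex measurable functions (resp. sequences) on $I$, and $\mu(t,f)=\inf\{s\ge0: m\{|f|>s\}\le t\}$ is the decreasing rearrangement. A quasi-normed symmetric space on $I$ is a quasi-normed space $E\subseteq L_0(I)$ such that $f\in L_0(I)$, $g\in E$, $\mu(f)\le\mu(g)$ imply $f\in E$ and $\|f\|_E\le\|g\|_E$; standing assumption: $E^*$ separates points of $E$. $E$ is order continuous if for every $f\in E$ and every sequence $0\le f_n\le |f|$ with $f_n\downarrow0$ a.e., $\|f_n\|_E\downarrow0$. The envelope norm is $\|f\|_{\widehat E}=\inf\{\sum_{i=1}^n\|f_i\|_E: f=\sum_{i=1}^nf_i,\ f_i\in E\}$. Convergence in measure: $m\{|f_n-f|>\varepsilon\}\to0$ for every $\varepsilon>0$. $E\in(HC)$ means: every sequence $(f_n)\subseteq E$ Cauchy in $\|\cdot\|_{\widehat E}$ and converging to $0$ in measure satisfies $\|f_n\|_{\widehat E}\to0$. *)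

theory Defs
  imports "HOL-Analysis.Analysis"
begin

text \<open>The measure space I is modelled as a measure M on a type 'a;
  functions in L_0(I) are complex-valued measurable functions on 'a.\<close>

definition L0 :: "'a measure \<Rightarrow> ('a \<Rightarrow> complex) set" where
  "L0 M = borel_measurable M"

text \<open>Decreasing rearrangement mu(t,f) = inf{s \<ge> 0 : m{|f|>s} \<le> t}, with value \<infinity> if the set is empty.\<close>
definition rearr :: "'a measure \<Rightarrow> ('a \<Rightarrow> complex) \<Rightarrow> real \<Rightarrow> ereal" where
  "rearr M f t = Inf {ereal s | s. 0 \<le> s \<and>
      emeasure M {x \<in> space M. s < cmod (f x)} \<le> ennreal t}"

definition quasi_normed_space ::
  "'a measure \<Rightarrow> ('a \<Rightarrow> complex) set \<Rightarrow> (('a \<Rightarrow> complex) \<Rightarrow> real) \<Rightarrow> bool" where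
  "quasi_normed_space M E N \<longleftrightarrow>
     E \<subseteq> L0 M \<and> (\<lambda>x. 0) \<in> E \<and>
     (\<forall>f\<in>E. \<forall>g\<in>E. (\<lambda>x. f x + g x) \<in> E) \<and>
     (\<forall>f\<in>E. \<forall>c::complex. (\<lambda>x. c * f x) \<in> E) \<and>
     (\<forall>f\<in>E. 0 \<le> N f) \<and>
     (\<forall>f\<in>E. N f = 0 \<longleftrightarrow> (AE x in M. f x = 0)) \<and>
     (\<forall>f\<in>E. \<forall>c::complex. N (\<lambda>x. c * f x) = cmod c * N f) \<and>
     (\<exists>C\<ge>1. \<forall>f\<in>E. \<forall>g\<in>E. N (\<lambda>x. f x + g x) \<le> C * (N f + N g))"

definition bounded_linear_functional ::
  "('a \<Rightarrow> complex) set \<Rightarrow> (('a \<Rightarrow> complex) \<Rightarrow> real) \<Rightarrow> (('a \<Rightarrow> complex) \<Rightarrow> complex) \<Rightarrow> bool" where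
  "bounded_linear_functional E N \<phi> \<longleftrightarrow>
     (\<forall>f\<in>E. \<forall>g\<in>E. \<phi> (\<lambda>x. f x + g x) = \<phi> f + \<phi> g) \<and>
     (\<forall>f\<in>E. \<forall>c::complex. \<phi> (\<lambda>x. c * f x) = c * \<phi> f) \<and>
     (\<exists>K. \<forall>f\<in>E. cmod (\<phi> f) \<le> K * N f)"

definition dual_separates ::
  "'a measure \<Rightarrow> ('a \<Rightarrow> complex) set \<Rightarrow> (('a \<Rightarrow> complex) \<Rightarrow> real) \<Rightarrow> bool" where
  "dual_separates M E N \<longleftrightarrow>
     (\<forall>f\<in>E. \<not> (AE x in M. f x = 0) \<longrightarrow>
        (\<exists>\<phi>. bounded_linear_functional E N \<phi> \<and> \<phi> f \<noteq> 0))"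

definition quasi_normed_symmetric_space ::
  "'a measure \<Rightarrow> ('a \<Rightarrow> complex) set \<Rightarrow> (('a \<Rightarrow> complex) \<Rightarrow> real) \<Rightarrow> bool" where
  "quasi_normed_symmetric_space M E N \<longleftrightarrow>
     quasi_normed_space M E N \<and>
     (\<forall>f g. f \<in> L0 M \<longrightarrow> g \<in> E \<longrightarrow> (\<forall>t\<ge>0. rearr M f t \<le> rearr M g t) \<longrightarrow>
        f \<in> E \<and> N f \<le> N g) \<and>
     dual_separates M E N"

definition order_continuous ::
  "'a measure \<Rightarrow> ('a \<Rightarrow> complex) set \<Rightarrow> (('a \<Rightarrow> complex) \<Rightarrow> real) \<Rightarrow> bool" where
  "order_continuous M E N \<longleftrightarrow>
     (\<forall>f\<in>E. \<forall>fs :: nat \<Rightarrow> 'a \<Rightarrow> real.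
        (\<forall>n. fs n \<in> borel_measurable M) \<longrightarrow>
        (\<forall>n. AE x in M. 0 \<le> fs n x \<and> fs n x \<le> cmod (f x)) \<longrightarrow>
        (AE x in M. decseq (\<lambda>n. fs n x) \<and> (\<lambda>n. fs n x) \<longlonglongrightarrow> 0) \<longrightarrow>
        (\<lambda>n. N (\<lambda>x. complex_of_real (fs n x))) \<longlonglongrightarrow> 0)"

definition env_norm ::
  "('a \<Rightarrow> complex) set \<Rightarrow> (('a \<Rightarrow> complex) \<Rightarrow> real) \<Rightarrow> ('a \<Rightarrow> complex) \<Rightarrow> real" where
  "env_norm E N f = Inf {(\<Sum>i<n. N (fs i)) | (n::nat) fs.
      (\<forall>i<n. fs i \<in> E) \<and> f = (\<lambda>x. \<Sum>i<n. fs i x)}"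

definition converges_in_measure ::
  "'a measure \<Rightarrow> (nat \<Rightarrow> 'a \<Rightarrow> complex) \<Rightarrow> ('a \<Rightarrow> complex) \<Rightarrow> bool" where
  "converges_in_measure M fs f \<longleftrightarrow>
     (\<forall>\<epsilon>>0. (\<lambda>n. emeasure M {x \<in> space M. \<epsilon> < cmod (fs n x - f x)}) \<longlonglongrightarrow> 0)"

definition HC ::
  "'a measure \<Rightarrow> ('a \<Rightarrow> complex) set \<Rightarrow> (('a \<Rightarrow> complex) \<Rightarrow> real) \<Rightarrow> bool" where
  "HC M E N \<longleftrightarrow>
     (\<forall>fs :: nat \<Rightarrow> 'a \<Rightarrow> complex.
        (\<forall>n. fs n \<in> E) \<longrightarrow>
        (\<forall>\<epsilon>>0. \<exists>K. \<forall>m\<ge>K. \<forall>n\<ge>K. env_norm E N (\<lambda>x. fs m x - fs n x) < \<epsilon>) \<longrightarrow>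
        converges_in_measure M fs (\<lambda>x. 0) \<longrightarrow>
        (\<lambda>n. env_norm E N (fs n)) \<longlonglongrightarrow> 0)"

end

theory Submission
  imports Defs
begin

text \<open>Let \<open>h\<close> be a limit in measure of functions \<open>h\<^sub>m\<close> of envelope norm at most \<open>\<epsilon>\<close>.
  Split \<open>h\<close> into the part where \<open>|h| < c\<close>, the part where \<open>|h| \<ge> c\<close> but \<open>h\<^sub>m\<close> is far from \<open>h\<close>,
  and the rest, where \<open>h = (h - h\<^sub>m) + h\<^sub>m\<close> with \<open>|h - h\<^sub>m| \<le> \<delta> |h|\<close>. Order continuity makes
  the first part small for small \<open>c\<close>, and the second small for suitable \<open>m\<close>: along a
  subsequence the exceptional sets have summable measure, so by Borel--Cantelli their tails
  shrink to a null set. The third part costs at most \<open>\<delta> N h + \<epsilon>\<close> in the envelope norm, since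
  restricting a decomposition of \<open>h\<^sub>m\<close> to a set does not increase its cost. Hence the envelope
  norm of \<open>h\<close> is at most \<open>\<epsilon>\<close>; with \<open>h = f\<^sub>n\<close> and \<open>h\<^sub>m = f\<^sub>n - f\<^sub>m\<close> this is property (HC).
  The argument works on every measure space.\<close>

lemma quasi_normed_symmetric_spaceD:
  assumes "quasi_normed_symmetric_space M E N"
  shows quasi_normed_symmetric_space_measurable: "\<And>f. f \<in> E \<Longrightarrow> f \<in> borel_measurable M"
    and quasi_normed_symmetric_space_add: "\<And>f g. f \<in> E \<Longrightarrow> g \<in> E \<Longrightarrow> (\<lambda>x. f x + g x) \<in> E"
    and quasi_normed_symmetric_space_scale: "\<And>f c. f \<in> E \<Longrightarrow> (\<lambda>x. c * f x) \<in> E"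
    and quasi_normed_symmetric_space_nonneg: "\<And>f. f \<in> E \<Longrightarrow> 0 \<le> N f"
    and quasi_normed_symmetric_space_norm_scale:
      "\<And>f c. f \<in> E \<Longrightarrow> N (\<lambda>x. c * f x) = cmod c * N f"
  using assms unfolding quasi_normed_symmetric_space_def quasi_normed_space_def L0_def
  by blast+

lemma quasi_normed_symmetric_space_dominated:
  assumes qs: "quasi_normed_symmetric_space M E N"
    and f: "f \<in> borel_measurable M" and g: "g \<in> E"
    and le: "\<And>x. x \<in> space M \<Longrightarrow> cmod (f x) \<le> cmod (g x)"
  shows "f \<in> E \<and> N f \<le> N g"
proof -
  have [measurable]: "g \<in> borel_measurable M"
    using quasi_normed_symmetric_space_measurable[OF qs g] .
  have "rearr M f t \<le> rearr M g t" for t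
    unfolding rearr_def
  proof (rule Inf_superset_mono, safe)
    fix s assume s: "0 \<le> s" "emeasure M {x \<in> space M. s < cmod (g x)} \<le> ennreal t"
    have "emeasure M {x \<in> space M. s < cmod (f x)} \<le> emeasure M {x \<in> space M. s < cmod (g x)}"
      by (rule emeasure_mono) (use le in fastforce, measurable)
    with s show "\<exists>s'. ereal s = ereal s' \<and> 0 \<le> s' \<and>
        emeasure M {x \<in> space M. s' < cmod (f x)} \<le> ennreal t"
      by (auto intro: order_trans)
  qed
  with qs f g show ?thesis
    unfolding quasi_normed_symmetric_space_def L0_def by blast
qed

lemma quasi_normed_symmetric_space_restrict:
  assumes qs: "quasi_normed_symmetric_space M E N" and h: "h \<in> E"
    and P: "{x \<in> space M. P x} \<in> sets M"
  shows "(\<lambda>x. if P x then h x else 0) \<in> E \<and> N (\<lambda>x. if P x then h x else 0) \<le> N h"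
  using quasi_normed_symmetric_space_measurable[OF qs h]
  by (intro quasi_normed_symmetric_space_dominated[OF qs _ h] measurable_If[OF _ _ P]) auto

subsection \<open>The envelope norm\<close>

definition decomposition_costs ::
  "('a \<Rightarrow> complex) set \<Rightarrow> (('a \<Rightarrow> complex) \<Rightarrow> real) \<Rightarrow> ('a \<Rightarrow> complex) \<Rightarrow> real set" where
  "decomposition_costs E N f = {(\<Sum>i<n. N (fs i)) | (n::nat) fs.
      (\<forall>i<n. fs i \<in> E) \<and> f = (\<lambda>x. \<Sum>i<n. fs i x)}"

lemma env_norm_eq_Inf_decomposition_costs: "env_norm E N f = Inf (decomposition_costs E N f)"
  unfolding env_norm_def decomposition_costs_def by simp

lemma decomposition_costsE:
  assumes "s \<in> decomposition_costs E N f"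
  obtains n :: nat and fs where "\<forall>i<n. fs i \<in> E" "f = (\<lambda>x. \<Sum>i<n. fs i x)" "s = (\<Sum>i<n. N (fs i))"
  using assms unfolding decomposition_costs_def by blast

lemma self_in_decomposition_costs: "f \<in> E \<Longrightarrow> N f \<in> decomposition_costs E N f"
  unfolding decomposition_costs_def by (intro CollectI exI[of _ 1] exI[of _ "\<lambda>_. f"]) auto

lemma bdd_below_decomposition_costs:
  assumes "quasi_normed_symmetric_space M E N"
  shows "bdd_below (decomposition_costs E N f)"
  using quasi_normed_symmetric_space_nonneg[OF assms]
  by (intro bdd_belowI[of _ 0]) (auto elim!: decomposition_costsE intro!: sum_nonneg)

lemma env_norm_le_cost:
  assumes "quasi_normed_symmetric_space M E N" and "s \<in> decomposition_costs E N f"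
  shows "env_norm E N f \<le> s"
  unfolding env_norm_eq_Inf_decomposition_costs
  by (rule cInf_lower[OF assms(2) bdd_below_decomposition_costs[OF assms(1)]])

lemma env_norm_nonneg:
  assumes qs: "quasi_normed_symmetric_space M E N" and "f \<in> E"
  shows "0 \<le> env_norm E N f"
  unfolding env_norm_eq_Inf_decomposition_costs
  using self_in_decomposition_costs[OF \<open>f \<in> E\<close>] quasi_normed_symmetric_space_nonneg[OF qs]
  by (intro cInf_greatest) (auto elim!: decomposition_costsE intro!: sum_nonneg)

lemma env_norm_add_le:
  assumes qs: "quasi_normed_symmetric_space M E N" and g: "g \<in> E" and k: "k \<in> E"
  shows "env_norm E N (\<lambda>x. g x + k x) \<le> N g + env_norm E N k"
proof -
  have "env_norm E N (\<lambda>x. g x + k x) - N g \<le> Inf (decomposition_costs E N k)"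
  proof (rule cInf_greatest)
    show "decomposition_costs E N k \<noteq> {}"
      using self_in_decomposition_costs[OF k] by blast
  next
    fix s assume "s \<in> decomposition_costs E N k"
    then obtain n :: nat and fs where fs: "\<forall>i<n. fs i \<in> E" "k = (\<lambda>x. \<Sum>i<n. fs i x)"
        "s = (\<Sum>i<n. N (fs i))"
      by (rule decomposition_costsE)
    define gs where "gs i = (case i of 0 \<Rightarrow> g | Suc j \<Rightarrow> fs j)" for i
    have "N g + s \<in> decomposition_costs E N (\<lambda>x. g x + k x)"
      unfolding decomposition_costs_def
      by (intro CollectI exI[of _ "Suc n"] exI[of _ gs])
        (use fs g in \<open>auto simp: gs_def sum.lessThan_Suc_shift simp del: sum.lessThan_Suc
          split: nat.splits\<close>)
    then show "env_norm E N (\<lambda>x. g x + k x) - N g \<le> s"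
      using env_norm_le_cost[OF qs] by fastforce
  qed
  then show ?thesis
    unfolding env_norm_eq_Inf_decomposition_costs by simp
qed

lemma env_norm_restrict_le:
  assumes qs: "quasi_normed_symmetric_space M E N" and k: "k \<in> E"
    and P: "{x \<in> space M. P x} \<in> sets M"
  shows "env_norm E N (\<lambda>x. if P x then k x else 0) \<le> env_norm E N k"
  unfolding env_norm_eq_Inf_decomposition_costs[of E N k]
proof (rule cInf_greatest)
  show "decomposition_costs E N k \<noteq> {}"
    using self_in_decomposition_costs[OF k] by blast
next
  fix s assume "s \<in> decomposition_costs E N k"
  then obtain n :: nat and fs where fs: "\<forall>i<n. fs i \<in> E" "k = (\<lambda>x. \<Sum>i<n. fs i x)"
      "s = (\<Sum>i<n. N (fs i))"
    by (rule decomposition_costsE)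
  define gs where "gs i = (\<lambda>x. if P x then fs i x else 0)" for i
  have gs: "gs i \<in> E \<and> N (gs i) \<le> N (fs i)" if "i < n" for i
    unfolding gs_def using fs that by (intro quasi_normed_symmetric_space_restrict[OF qs _ P]) auto
  have "(\<Sum>i<n. N (gs i)) \<in> decomposition_costs E N (\<lambda>x. if P x then k x else 0)"
    unfolding decomposition_costs_def
    by (intro CollectI exI[of _ n] exI[of _ gs]) (use fs gs in \<open>auto simp: gs_def\<close>)
  then have "env_norm E N (\<lambda>x. if P x then k x else 0) \<le> (\<Sum>i<n. N (gs i))"
    by (rule env_norm_le_cost[OF qs])
  also have "\<dots> \<le> s"
    using fs gs by (auto intro!: sum_mono)
  finally show "env_norm E N (\<lambda>x. if P x then k x else 0) \<le> s" .
qed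

subsection \<open>Consequences of order continuity\<close>

lemma order_continuous_restrict_tendsto_zero:
  assumes qs: "quasi_normed_symmetric_space M E N" and oc: "order_continuous M E N"
    and h: "h \<in> E" and P: "\<And>k. {x \<in> space M. P k x} \<in> sets M"
    and P_mono: "\<And>k x. P (Suc k) x \<Longrightarrow> P k x"
    and P_vanish: "AE x in M. h x \<noteq> 0 \<longrightarrow> (\<forall>\<^sub>F k in sequentially. \<not> P k x)"
  shows "(\<lambda>k. N (\<lambda>x. if P k x then h x else 0)) \<longlonglongrightarrow> 0"
proof -
  have [measurable]: "h \<in> borel_measurable M"
    using quasi_normed_symmetric_space_measurable[OF qs h] .
  define fs where "fs k x = (if P k x then cmod (h x) else 0)" for k x
  have fs_meas[measurable]: "fs k \<in> borel_measurable M" for k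
    unfolding fs_def by (rule measurable_If[OF _ _ P]) auto
  have fs_dec: "decseq (\<lambda>k. fs k x)" for x
    by (rule decseq_SucI) (auto simp: fs_def dest: P_mono)
  have fs_lim: "(\<lambda>k. N (\<lambda>x. complex_of_real (fs k x))) \<longlonglongrightarrow> 0"
  proof (rule oc[unfolded order_continuous_def, rule_format, OF h fs_meas])
    show "AE x in M. 0 \<le> fs k x \<and> fs k x \<le> cmod (h x)" for k
      by (simp add: fs_def)
    show "AE x in M. decseq (\<lambda>k. fs k x) \<and> (\<lambda>k. fs k x) \<longlonglongrightarrow> 0"
      using P_vanish
    proof eventually_elim
      case (elim x)
      have "\<forall>\<^sub>F k in sequentially. fs k x = 0"
        using elim by (cases "h x = 0") (auto simp: fs_def elim: eventually_mono)
      then have "(\<lambda>k. fs k x) \<longlonglongrightarrow> 0"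
        by (rule tendsto_eventually)
      with fs_dec show ?case
        by blast
    qed
  qed
  have bounds: "0 \<le> N (\<lambda>x. if P k x then h x else 0)
      \<and> N (\<lambda>x. if P k x then h x else 0) \<le> N (\<lambda>x. complex_of_real (fs k x))" for k
  proof -
    have fs_E: "(\<lambda>x. complex_of_real (fs k x)) \<in> E"
      by (rule conjunct1[OF quasi_normed_symmetric_space_dominated[OF qs _ h]])
        (measurable, simp add: fs_def)
    have "(\<lambda>x. if P k x then h x else 0) \<in> E
        \<and> N (\<lambda>x. if P k x then h x else 0) \<le> N (\<lambda>x. complex_of_real (fs k x))"
      by (intro quasi_normed_symmetric_space_dominated[OF qs measurable_If[OF _ _ P] fs_E])
        (auto simp: fs_def)
    then show ?thesis
      using quasi_normed_symmetric_space_nonneg[OF qs] by blast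
  qed
  show ?thesis
    by (rule tendsto_sandwich[OF always_eventually always_eventually tendsto_const fs_lim])
      (use bounds in blast)+
qed

lemma order_continuous_small_near_zero:
  assumes qs: "quasi_normed_symmetric_space M E N" and oc: "order_continuous M E N"
    and h: "h \<in> E" and e: "0 < e"
  obtains c where "0 < c" "N (\<lambda>x. if cmod (h x) < c then h x else 0) < e"
proof -
  have [measurable]: "h \<in> borel_measurable M"
    using quasi_normed_symmetric_space_measurable[OF qs h] .
  have "(\<lambda>k. N (\<lambda>x. if cmod (h x) < inverse (real (Suc k)) then h x else 0)) \<longlonglongrightarrow> 0"
  proof (rule order_continuous_restrict_tendsto_zero[OF qs oc h])
    show "\<And>k x. cmod (h x) < inverse (real (Suc (Suc k))) \<Longrightarrow> cmod (h x) < inverse (real (Suc k))"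
      by (erule less_le_trans) (simp add: field_simps)
    show "AE x in M. h x \<noteq> 0 \<longrightarrow> (\<forall>\<^sub>F k in sequentially. \<not> cmod (h x) < inverse (real (Suc k)))"
    proof (intro AE_I2 impI)
      fix x assume "h x \<noteq> 0"
      then show "\<forall>\<^sub>F k in sequentially. \<not> cmod (h x) < inverse (real (Suc k))"
        using order_tendstoD(2)[OF LIMSEQ_inverse_real_of_nat, of "cmod (h x)"]
        by (auto elim: eventually_mono)
    qed
  qed simp
  from order_tendstoD(2)[OF this e] obtain k
    where "N (\<lambda>x. if cmod (h x) < inverse (real (Suc k)) then h x else 0) < e"
    by (auto simp: eventually_sequentially)
  then show ?thesis
    by (intro that[of "inverse (real (Suc k))"]) auto
qed

lemma order_continuous_small_on_vanishing_sets:
  assumes qs: "quasi_normed_symmetric_space M E N" and oc: "order_continuous M E N"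
    and h: "h \<in> E" and A: "\<And>m. A m \<in> sets M"
    and A_vanish: "(\<lambda>m. emeasure M (A m)) \<longlonglongrightarrow> 0" and e: "0 < e"
  obtains m where "N (\<lambda>x. if x \<in> A m then h x else 0) < e"
proof -
  have "\<exists>m. emeasure M (A m) < ennreal ((1/2)^j)" for j
    using order_tendstoD(2)[OF A_vanish, of "ennreal ((1/2)^j)"]
    by (auto simp: eventually_sequentially)
  then obtain r where r: "\<And>j. emeasure M (A (r j)) < ennreal ((1/2)^j)"
    by metis
  have r_finite: "emeasure M (A (r j)) < \<infinity>" for j
    using r[of j] by (auto simp: less_top[symmetric] top_unique)
  have "summable (\<lambda>j. measure M (A (r j)))"
  proof (rule summable_comparison_test'[OF summable_geometric[of "1/2"]])
    show "norm (measure M (A (r j))) \<le> (1/2) ^ j" for j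
      unfolding measure_def by (simp add: enn2real_leI less_imp_le[OF r])
  qed simp
  from borel_cantelli_AE1[of "\<lambda>j. A (r j)" M, OF A r_finite this]
  have eventually_outside: "AE x in M. \<forall>\<^sub>F j in sequentially. x \<notin> A (r j)"
    by eventually_elim (auto elim: eventually_mono)
  define T where "T k x = (\<exists>j\<ge>k. x \<in> A (r j))" for k x
  have T_sets: "{x \<in> space M. T k x} \<in> sets M" for k
  proof -
    have "{x \<in> space M. T k x} = (\<Union>j\<in>{k..}. A (r j))"
      unfolding T_def using A sets.sets_into_space by blast
    then show ?thesis
      using A by auto
  qed
  have "(\<lambda>k. N (\<lambda>x. if T k x then h x else 0)) \<longlonglongrightarrow> 0"
  proof (rule order_continuous_restrict_tendsto_zero[OF qs oc h T_sets])
    show "T (Suc k) x \<Longrightarrow> T k x" for k x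
      unfolding T_def by (auto intro: Suc_leD)
    show "AE x in M. h x \<noteq> 0 \<longrightarrow> (\<forall>\<^sub>F k in sequentially. \<not> T k x)"
      using eventually_outside
      by eventually_elim (auto simp: T_def eventually_sequentially intro: order_trans)
  qed
  from order_tendstoD(2)[OF this e] obtain k
    where k: "N (\<lambda>x. if T k x then h x else 0) < e"
    by (auto simp: eventually_sequentially)
  have "N (\<lambda>x. if x \<in> A (r k) then h x else 0) \<le> N (\<lambda>x. if T k x then h x else 0)"
  proof (rule conjunct2[OF quasi_normed_symmetric_space_dominated[OF qs]])
    show "(\<lambda>x. if x \<in> A (r k) then h x else 0) \<in> borel_measurable M"
      using quasi_normed_symmetric_space_measurable[OF qs h] A
      by (intro measurable_If_set) auto
    show "(\<lambda>x. if T k x then h x else 0) \<in> E"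
      using quasi_normed_symmetric_space_restrict[OF qs h T_sets] ..
    show "cmod (if x \<in> A (r k) then h x else 0) \<le> cmod (if T k x then h x else 0)" for x
      by (auto simp: T_def)
  qed
  with k show ?thesis
    by (intro that[of "r k"]) simp
qed

subsection \<open>Property (HC)\<close>

lemma env_norm_restrict_close_le:
  assumes qs: "quasi_normed_symmetric_space M E N" and h: "h \<in> E" and g: "g \<in> E"
    and D: "{x \<in> space M. D x} \<in> sets M" and \<delta>: "0 \<le> \<delta>"
    and close: "\<And>x. D x \<Longrightarrow> cmod (h x - g x) \<le> \<delta> * cmod (h x)"
  shows "env_norm E N (\<lambda>x. if D x then h x else 0) \<le> \<delta> * N h + env_norm E N g"
proof -
  have [measurable]: "h \<in> borel_measurable M" "g \<in> borel_measurable M"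
    using quasi_normed_symmetric_space_measurable[OF qs] h g by auto
  define d where "d x = (if D x then h x - g x else 0)" for x
  have d: "d \<in> E \<and> N d \<le> N (\<lambda>x. complex_of_real \<delta> * h x)"
  proof (rule quasi_normed_symmetric_space_dominated[OF qs])
    show "d \<in> borel_measurable M"
      unfolding d_def by (rule measurable_If[OF _ _ D]) measurable
    show "(\<lambda>x. complex_of_real \<delta> * h x) \<in> E"
      using quasi_normed_symmetric_space_scale[OF qs h] .
    show "cmod (d x) \<le> cmod (complex_of_real \<delta> * h x)" for x
      using close[of x] \<delta> by (simp add: d_def norm_mult)
  qed
  have "N (\<lambda>x. complex_of_real \<delta> * h x) = \<delta> * N h"
    using quasi_normed_symmetric_space_norm_scale[OF qs h] \<delta> by simp
  moreover have "(\<lambda>x. if D x then g x else 0) \<in> E"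
    using quasi_normed_symmetric_space_restrict[OF qs g D] ..
  moreover have "(\<lambda>x. if D x then h x else 0) = (\<lambda>x. d x + (if D x then g x else 0))"
    by (rule ext) (simp add: d_def)
  ultimately have "env_norm E N (\<lambda>x. if D x then h x else 0)
      \<le> \<delta> * N h + env_norm E N (\<lambda>x. if D x then g x else 0)"
    using env_norm_add_le[OF qs, of d "\<lambda>x. if D x then g x else 0"] d by simp
  also have "\<dots> \<le> \<delta> * N h + env_norm E N g"
    using env_norm_restrict_le[OF qs g D] by simp
  finally show ?thesis .
qed

lemma env_norm_le_of_converges_in_measure:
  assumes qs: "quasi_normed_symmetric_space M E N" and oc: "order_continuous M E N"
    and h: "h \<in> E" and hs: "\<And>m. hs m \<in> E"
    and hs_env: "\<And>m. env_norm E N (hs m) \<le> \<epsilon>"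
    and conv: "converges_in_measure M hs h"
  shows "env_norm E N h \<le> \<epsilon>"
proof (rule field_le_epsilon)
  fix e :: real assume e: "0 < e"
  have [measurable]: "h \<in> borel_measurable M" "\<And>m. hs m \<in> borel_measurable M"
    using quasi_normed_symmetric_space_measurable[OF qs] h hs by auto
  have e3: "0 < e / 3"
    using e by simp
  obtain c where c: "0 < c" and a_small: "N (\<lambda>x. if cmod (h x) < c then h x else 0) < e / 3"
    using order_continuous_small_near_zero[OF qs oc h e3] by blast
  define a where "a x = (if cmod (h x) < c then h x else 0)" for x
  have a: "a \<in> E"
    unfolding a_def by (rule conjunct1[OF quasi_normed_symmetric_space_restrict[OF qs h]]) simp

  have Nh: "0 \<le> N h"
    using quasi_normed_symmetric_space_nonneg[OF qs h] .
  define \<delta> where "\<delta> = e / (3 * (N h + 1))"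
  have \<delta>: "0 < \<delta>" "\<delta> * N h \<le> e / 3"
    using e Nh by (auto simp: \<delta>_def field_simps)
  define \<eta> where "\<eta> = \<delta> * c"
  define B where "B m = {x \<in> space M. \<eta> < cmod (hs m x - h x)}" for m
  have B_sets: "B m \<in> sets M" for m
    unfolding B_def by measurable
  have "(\<lambda>m. emeasure M (B m)) \<longlonglongrightarrow> 0"
    using conv \<delta>(1) c unfolding converges_in_measure_def B_def \<eta>_def by simp
  then obtain m where B_small: "N (\<lambda>x. if x \<in> B m then h x else 0) < e / 3"
    using order_continuous_small_on_vanishing_sets[where A = B, OF qs oc h B_sets _ e3] by blast

  define b where "b x = (if \<not> cmod (h x) < c \<and> \<eta> < cmod (hs m x - h x) then h x else 0)" for x
  have b: "b \<in> E \<and> N b \<le> N (\<lambda>x. if x \<in> B m then h x else 0)"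
  proof (rule quasi_normed_symmetric_space_dominated[OF qs])
    show "b \<in> borel_measurable M"
      unfolding b_def by measurable
    show "(\<lambda>x. if x \<in> B m then h x else 0) \<in> E"
      using quasi_normed_symmetric_space_restrict[OF qs h, of "\<lambda>x. x \<in> B m"] B_sets[of m]
      by (simp add: B_def)
    show "cmod (b x) \<le> cmod (if x \<in> B m then h x else 0)" if "x \<in> space M" for x
      using that by (simp add: b_def B_def)
  qed

  define D where "D x \<longleftrightarrow> \<not> cmod (h x) < c \<and> \<not> \<eta> < cmod (hs m x - h x)" for x
  have D_sets: "{x \<in> space M. D x} \<in> sets M"
    unfolding D_def by measurable
  have D_close: "cmod (h x - hs m x) \<le> \<delta> * cmod (h x)" if "D x" for x
  proof -
    have "cmod (h x - hs m x) \<le> \<delta> * c"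
      using that by (simp add: D_def \<eta>_def norm_minus_commute)
    also have "\<dots> \<le> \<delta> * cmod (h x)"
      using that \<delta>(1) by (simp add: D_def)
    finally show ?thesis .
  qed
  have D_part: "env_norm E N (\<lambda>x. if D x then h x else 0) \<le> e / 3 + \<epsilon>"
    using env_norm_restrict_close_le[OF qs h hs[of m] D_sets less_imp_le[OF \<delta>(1)] D_close]
      \<delta>(2) hs_env[of m] by linarith
  have D_E: "(\<lambda>x. if D x then h x else 0) \<in> E"
    using quasi_normed_symmetric_space_restrict[OF qs h D_sets] ..

  have decomposition: "(\<lambda>x. a x + (b x + (if D x then h x else 0))) = h"
    by (rule ext) (simp add: a_def b_def D_def)
  have "env_norm E N (\<lambda>x. a x + (b x + (if D x then h x else 0)))
      \<le> N a + (N b + env_norm E N (\<lambda>x. if D x then h x else 0))"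
    using env_norm_add_le[OF qs a] env_norm_add_le[OF qs _ D_E] b
      quasi_normed_symmetric_space_add[OF qs _ D_E] by fastforce
  then have "env_norm E N h \<le> N a + (N b + env_norm E N (\<lambda>x. if D x then h x else 0))"
    by (simp only: decomposition)
  moreover have "N a < e / 3" "N b < e / 3"
    using a_small b B_small unfolding a_def by auto
  ultimately show "env_norm E N h \<le> \<epsilon> + e"
    using D_part by linarith
qed

lemma order_continuous_imp_HC:
  assumes qs: "quasi_normed_symmetric_space M E N" and oc: "order_continuous M E N"
  shows "HC M E N"
  unfolding HC_def
proof (intro allI impI)
  fix fs :: "nat \<Rightarrow> 'a \<Rightarrow> complex"
  assume fs: "\<forall>n. fs n \<in> E"
    and cauchy: "\<forall>\<epsilon>>0. \<exists>K. \<forall>m\<ge>K. \<forall>n\<ge>K. env_norm E N (\<lambda>x. fs m x - fs n x) < \<epsilon>"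
    and fs_zero: "converges_in_measure M fs (\<lambda>x. 0)"
  show "(\<lambda>n. env_norm E N (fs n)) \<longlonglongrightarrow> 0"
  proof (rule LIMSEQ_I)
    fix r :: real assume r: "0 < r"
    then obtain K where K: "\<forall>m\<ge>K. \<forall>n\<ge>K. env_norm E N (\<lambda>x. fs m x - fs n x) < r / 2"
      using cauchy by (meson half_gt_zero)
    have "env_norm E N (fs n) \<le> r / 2" if n: "n \<ge> K" for n
    proof (rule env_norm_le_of_converges_in_measure[OF qs oc])
      show "fs n \<in> E" "(\<lambda>x. fs n x - fs (m + K) x) \<in> E" for m
        using fs quasi_normed_symmetric_space_add[OF qs, of "fs n" "\<lambda>x. - fs (m + K) x"]
          quasi_normed_symmetric_space_scale[OF qs, of "fs (m + K)" "-1"] by auto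
      show "env_norm E N (\<lambda>x. fs n x - fs (m + K) x) \<le> r / 2" for m
        using K n by (simp add: less_imp_le)
      show "converges_in_measure M (\<lambda>m x. fs n x - fs (m + K) x) (fs n)"
        unfolding converges_in_measure_def
      proof (intro allI impI)
        fix \<eta> :: real assume "0 < \<eta>"
        with fs_zero have "(\<lambda>m. emeasure M {x \<in> space M. \<eta> < cmod (fs m x - 0)}) \<longlonglongrightarrow> 0"
          unfolding converges_in_measure_def by blast
        from LIMSEQ_ignore_initial_segment[OF this, of K]
        show "(\<lambda>m. emeasure M {x \<in> space M. \<eta> < cmod (fs n x - fs (m + K) x - fs n x)}) \<longlonglongrightarrow> 0"
          by simp
      qed
    qed
    then show "\<exists>K. \<forall>n\<ge>K. norm (env_norm E N (fs n) - 0) < r"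
      using env_norm_nonneg[OF qs] fs r by (intro exI[of _ K]) fastforce
  qed
qed

theorem mainTheorem4:
  shows "(\<forall>(\<alpha>::ereal) (E :: (real \<Rightarrow> complex) set) N.
            0 < \<alpha> \<longrightarrow>
            quasi_normed_symmetric_space (lebesgue_on {x. 0 \<le> x \<and> ereal x < \<alpha>}) E N \<longrightarrow>
            order_continuous (lebesgue_on {x. 0 \<le> x \<and> ereal x < \<alpha>}) E N \<longrightarrow>
            HC (lebesgue_on {x. 0 \<le> x \<and> ereal x < \<alpha>}) E N)
       \<and> (\<forall>(E :: (nat \<Rightarrow> complex) set) N.
            quasi_normed_symmetric_space (count_space UNIV) E N \<longrightarrow>
            order_continuous (count_space UNIV) E N \<longrightarrow>
            (\<forall>f\<in>E. f \<longlonglongrightarrow> 0) \<longrightarrow>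
            HC (count_space UNIV) E N)"
  by (intro conjI allI impI order_continuous_imp_HC)

end
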